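(* Let $\alpha\in(1,2)$ and let $X_1$ be a random variable with characteristic function $\mathbb{E}e^{itX_1}=\exp\left(2\int_0^1(\cos(tx)-1)\frac{dx}{x^{\alpha+1}}\right)$. Then for every $t\in\mathbb{R}$, $$\exp\Big(\frac{t^2}{2-\alpha}\Big)\le\mathbb{E}\exp(tX_1)\le\exp\Big(\frac{1}{24}t^4\Big(\frac{14}{15}+\frac1{15}\cosh t\Big)\Big)\exp\Big(\frac{t^2}{2-\alpha}\Big).$$
   Context: The characteristic function equals $\exp\left(\int_{-1}^1(e^{itx}-1)\frac{dx}{|x|^{\alpha+1}}\right)$ in the symmetric principal-value sense. *)

theory Defs
  imports "HOL-Probability.Probability"
begin

end

theory Submission
  imports Defs "HOL-Complex_Analysis.Cauchy_Integral_Formula" "HOL-Real_Asymp.Real_Asymp"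
begin

text \<open>
  Expanding the cosine under the integral shows that the characteristic function is
  \<open>exp (2 \<psi> (\<i> s))\<close>, where \<open>\<psi> z = \<Sum> z\<^sup>m / (m! (m - \<alpha>))\<close> (summed over even \<open>m \<ge> 2\<close>)
  is entire. A characteristic function with an entire extension \<open>F\<close> determines the even moments
  as Taylor coefficients of \<open>F\<close>: the symmetric finite differences \<open>(2 - 2 cos (h x))\<^sup>n\<close>, divided
  by \<open>h\<^sup>2\<^sup>n\<close>, converge to \<open>x\<^sup>2\<^sup>n\<close>, and Fatou's lemma identifies the limit of their expectations.
  Summing the moments gives \<open>E cosh (t X) = F t\<close>, and since the law is symmetric,
  \<open>E exp (t X) = exp (2 \<psi> t)\<close>. All coefficients of \<open>\<psi>\<close> are nonnegative, so \<open>2 \<psi> t\<close> is at least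
  its quadratic term \<open>t\<^sup>2 / (2 - \<alpha>)\<close>, and the remaining terms are bounded by the cosh series.
\<close>

definition alt_power_sum :: "nat \<Rightarrow> nat \<Rightarrow> real" where
  "alt_power_sum n p = (\<Sum>k\<le>n. (-1)^k * real (n choose k) * real k ^ p)"

lemma alt_power_sum_Suc:
  "alt_power_sum (Suc n) (Suc q) = - real (Suc n) * (\<Sum>r\<le>q. real (q choose r) * alt_power_sum n r)"
proof -
  have "alt_power_sum (Suc n) (Suc q)
      = (\<Sum>j\<le>n. (-1)^(Suc j) * real (Suc n choose Suc j) * real (Suc j) ^ Suc q)"
    unfolding alt_power_sum_def sum.atMost_Suc_shift by simp
  also have "\<dots> = (\<Sum>j\<le>n. - real (Suc n) * ((-1)^j * real (n choose j) * (real j + 1) ^ q))"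
  proof (rule sum.cong[OF refl])
    fix j
    have binomial: "real (Suc j) * real (Suc n choose Suc j) = real (Suc n) * real (n choose j)"
      using Suc_times_binomial[of j n] by (metis of_nat_mult)
    have "(-1)^(Suc j) * real (Suc n choose Suc j) * real (Suc j) ^ Suc q
        = - ((-1)^j * (real (Suc j) * real (Suc n choose Suc j)) * real (Suc j) ^ q)"
      by (simp add: algebra_simps)
    then show "(-1)^(Suc j) * real (Suc n choose Suc j) * real (Suc j) ^ Suc q
        = - real (Suc n) * ((-1)^j * real (n choose j) * (real j + 1) ^ q)"
      unfolding binomial by (simp add: algebra_simps)
  qed
  also have "\<dots> = - real (Suc n) * (\<Sum>j\<le>n. (-1)^j * real (n choose j) * (\<Sum>r\<le>q. real (q choose r) * real j ^ r))"
    by (simp add: sum_distrib_left binomial_ring[of "real _" 1] mult.commute)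
  also have "\<dots> = - real (Suc n) * (\<Sum>r\<le>q. real (q choose r) * alt_power_sum n r)"
    by (simp add: alt_power_sum_def sum_distrib_left sum.swap[of _ "{..n}"] algebra_simps)
  finally show ?thesis .
qed

lemma alt_power_sum_eq:
  "p \<le> n \<Longrightarrow> alt_power_sum n p = (if p < n then 0 else (-1)^n * fact n)"
proof (induction n arbitrary: p)
  case 0
  then show ?case by (simp add: alt_power_sum_def)
next
  case (Suc n)
  show ?case
  proof (cases p)
    case 0
    then show ?thesis
      using choose_alternating_sum[of "Suc n", where 'a=real] by (simp add: alt_power_sum_def)
  next
    case (Suc q)
    with Suc.prems have "q \<le> n" by simp
    have "(\<Sum>r\<le>q. real (q choose r) * alt_power_sum n r) = (\<Sum>r\<le>q. if r = n then (-1)^n * fact n else 0)"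
      by (rule sum.cong) (use Suc.IH \<open>q \<le> n\<close> in auto)
    then show ?thesis
      using \<open>q \<le> n\<close> by (simp add: Suc alt_power_sum_Suc algebra_simps)
  qed
qed

text \<open>
  By \<open>of_real_two_minus_two_cos_power\<close> below, \<open>alt_difference_sum n m / m!\<close> is the coefficient of
  \<open>(\<i> u)\<^sup>m\<close> in \<open>(2 - 2 cos u)\<^sup>n\<close>; the lemmas \<open>alt_difference_sum_eq_0\<close> and
  \<open>alt_difference_sum_double\<close> say that \<open>(2 - 2 cos u)\<^sup>n = u\<^sup>2\<^sup>n + O(u\<^sup>2\<^sup>n\<^sup>+\<^sup>1)\<close>.
\<close>

definition cos_power_weight :: "nat \<Rightarrow> nat \<Rightarrow> nat \<Rightarrow> real" where
  "cos_power_weight n k l = (-1)^(k+l) * real (n choose k) * real (n choose l)"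

definition alt_difference_sum :: "nat \<Rightarrow> nat \<Rightarrow> real" where
  "alt_difference_sum n m = (\<Sum>k\<le>n. \<Sum>l\<le>n. cos_power_weight n k l * (real k - real l)^m)"

lemma alt_difference_sum_expand:
  "alt_difference_sum n m = (\<Sum>p\<le>m. real (m choose p) * alt_power_sum n p * ((-1)^(m-p) * alt_power_sum n (m-p)))"
proof -
  have "alt_difference_sum n m = (\<Sum>k\<le>n. \<Sum>l\<le>n. \<Sum>p\<le>m. real (m choose p) *
      (((-1)^k * real (n choose k) * real k ^ p) * ((-1)^(m-p) * ((-1)^l * real (n choose l) * real l ^ (m-p)))))"
    unfolding alt_difference_sum_def cos_power_weight_def
  proof (intro sum.cong refl)
    fix k l
    have binomial: "(real k - real l)^m = (\<Sum>p\<le>m. real (m choose p) * real k ^ p * (- real l) ^ (m-p))"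
      using binomial_ring[of "real k" "- real l" m] by simp
    show "(-1)^(k+l) * real (n choose k) * real (n choose l) * (real k - real l)^m = (\<Sum>p\<le>m. real (m choose p) *
      (((-1)^k * real (n choose k) * real k ^ p) * ((-1)^(m-p) * ((-1)^l * real (n choose l) * real l ^ (m-p)))))"
      unfolding binomial sum_distrib_left
      by (intro sum.cong refl) (simp add: power_minus[of "real l"] power_add mult_ac)
  qed
  also have "\<dots> = (\<Sum>p\<le>m. \<Sum>k\<le>n. \<Sum>l\<le>n. real (m choose p) *
      (((-1)^k * real (n choose k) * real k ^ p) * ((-1)^(m-p) * ((-1)^l * real (n choose l) * real l ^ (m-p)))))"
    by (subst sum.swap, rule sum.cong[OF refl], rule sum.swap)
  also have "\<dots> = (\<Sum>p\<le>m. real (m choose p) * alt_power_sum n p * ((-1)^(m-p) * alt_power_sum n (m-p)))"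
  proof -
    have "(\<Sum>k\<in>A. \<Sum>l\<in>B. c * (f k * (s * g l))) = c * sum f A * (s * sum g B)"
      for A B :: "nat set" and c s :: real and f g :: "nat \<Rightarrow> real"
    proof -
      have "c * sum f A * (s * sum g B) = (c * s) * (sum f A * sum g B)"
        by (simp add: mult_ac)
      also have "\<dots> = (\<Sum>k\<in>A. \<Sum>l\<in>B. (c * s) * (f k * g l))"
        unfolding sum_product by (simp add: sum_distrib_left)
      finally show ?thesis by (simp add: mult_ac)
    qed
    then show ?thesis unfolding alt_power_sum_def by (intro sum.cong refl)
  qed
  finally show ?thesis .
qed

lemma alt_difference_sum_eq_0:
  assumes "m < 2*n"
  shows "alt_difference_sum n m = 0"
  unfolding alt_difference_sum_expand
proof (rule sum.neutral, intro ballI)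
  fix p assume "p \<in> {..m}"
  with assms have "p < n \<or> m - p < n" by auto
  then show "real (m choose p) * alt_power_sum n p * ((-1)^(m-p) * alt_power_sum n (m-p)) = 0"
    by (auto simp: alt_power_sum_eq)
qed

lemma alt_difference_sum_double: "alt_difference_sum n (2*n) = (-1)^n * fact (2*n)"
proof -
  have "alt_difference_sum n (2*n)
      = (\<Sum>p\<in>{n}. real ((2*n) choose p) * alt_power_sum n p * ((-1)^(2*n-p) * alt_power_sum n (2*n-p)))"
    unfolding alt_difference_sum_expand
  proof (rule sum.mono_neutral_right)
    show "\<forall>p\<in>{..2*n} - {n}. real ((2*n) choose p) * alt_power_sum n p * ((-1)^(2*n-p) * alt_power_sum n (2*n-p)) = 0"
    proof
      fix p assume "p \<in> {..2*n} - {n}"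
      then have "p < n \<or> 2*n - p < n" by auto
      then show "real ((2*n) choose p) * alt_power_sum n p * ((-1)^(2*n-p) * alt_power_sum n (2*n-p)) = 0"
        by (auto simp: alt_power_sum_eq)
    qed
  qed auto
  also have "\<dots> = real ((2*n) choose n) * (fact n * fact n) * (-1)^n"
    by (simp add: alt_power_sum_eq algebra_simps power_add[symmetric] mult_2)
  also have "real ((2*n) choose n) * (fact n * fact n) = fact (2*n)"
    by (simp add: binomial_fact)
  finally show ?thesis by simp
qed

lemma powser_div_power_tendsto:
  fixes a :: "nat \<Rightarrow> 'a::{real_normed_field,banach}"
  assumes sums: "\<And>z. (\<lambda>m. a m * z^m) sums g z"
    and lower: "\<And>m. m < k \<Longrightarrow> a m = 0"
  shows "((\<lambda>z. g z / z^k) \<longlongrightarrow> a k) (at 0)"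
proof -
  have shifted: "(\<lambda>j. a (j + k) * z^j) sums (g z / z^k)" if "z \<noteq> 0" for z
  proof -
    have "(\<lambda>j. a (j + k) * z^(j + k)) sums g z"
      using sums_split_initial_segment[OF sums[of z], of k] by (simp add: lower)
    from sums_divide[OF this, of "z^k"] show ?thesis
      using that by (simp add: power_add)
  qed
  define P where "P z = (\<Sum>j. a (j + k) * z^j)" for z
  have "isCont P 0"
    unfolding P_def by (rule isCont_powser[OF sums_summable[OF shifted[of 1]]]) simp_all
  moreover have "P 0 = a k"
    unfolding P_def using powser_zero[of "\<lambda>j. a (j + k)"] by simp
  ultimately have "(P \<longlongrightarrow> a k) (at 0)"
    by (simp add: isCont_def)
  moreover have "eventually (\<lambda>z. P z = g z / z^k) (at 0)"
    unfolding eventually_at_filter P_def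
    by (intro always_eventually allI impI sums_unique[symmetric] shifted)
  ultimately show ?thesis
    by (rule Lim_transform_eventually)
qed

lemma of_real_two_minus_two_cos_power:
  "complex_of_real ((2 - 2 * cos u)^n) =
    (\<Sum>k\<le>n. \<Sum>l\<le>n. of_real (cos_power_weight n k l) * iexp ((real k - real l) * u))"
proof -
  define e where "e = iexp u"
  define e' where "e' = iexp (- u)"
  have "e * e' = 1"
    unfolding e_def e'_def by (simp add: exp_add[symmetric])
  moreover have "2 * complex_of_real (cos u) = e + e'"
    unfolding e_def e'_def using cos_exp_eq[of "complex_of_real u"] by (simp add: cos_of_real mult.commute)
  ultimately have factor: "complex_of_real (2 - 2 * cos u) = (1 - e) * (1 - e')"
    by (simp add: algebra_simps)
  have power_term: "(-e)^k * (-e')^l = (-1)^(k+l) * iexp ((real k - real l) * u)" for k l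
  proof -
    have "e^k * e'^l = iexp ((real k - real l) * u)"
      unfolding e_def e'_def exp_of_nat_mult[symmetric] exp_add[symmetric]
      by (simp add: algebra_simps)
    then show ?thesis
      unfolding power_minus[of e] power_minus[of e'] power_add by (simp add: mult_ac)
  qed
  have "complex_of_real ((2 - 2 * cos u)^n) = (1 - e)^n * (1 - e')^n"
    by (simp only: of_real_power factor power_mult_distrib)
  also have "\<dots> = (\<Sum>k\<le>n. of_nat (n choose k) * (-e)^k) * (\<Sum>l\<le>n. of_nat (n choose l) * (-e')^l)"
    using binomial_ring[of "-e" 1 n] binomial_ring[of "-e'" 1 n] by simp
  also have "\<dots> = (\<Sum>k\<le>n. \<Sum>l\<le>n. of_real (cos_power_weight n k l) * iexp ((real k - real l) * u))"
    unfolding sum_product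
  proof (intro sum.cong refl)
    fix k l
    have "(of_nat (n choose k) * (-e)^k) * (of_nat (n choose l) * (-e')^l)
        = complex_of_real (real (n choose k) * real (n choose l)) * ((-e)^k * (-e')^l)"
      by (simp add: mult_ac)
    then show "(of_nat (n choose k) * (-e)^k) * (of_nat (n choose l) * (-e')^l)
        = of_real (cos_power_weight n k l) * iexp ((real k - real l) * u)"
      unfolding power_term by (simp add: cos_power_weight_def mult_ac)
  qed
  finally show ?thesis .
qed

lemma two_minus_two_cos_scaled_bounds:
  fixes x c :: real
  shows "0 \<le> (2 - 2 * cos (x / c)) * c^2"
    and "(2 - 2 * cos (x / c)) * c^2 \<le> x^2"
    and "(2 - 2 * cos (x / c)) * c^2 \<le> 4 * c^2"
proof -
  show "0 \<le> (2 - 2 * cos (x / c)) * c^2"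
    using cos_le_one[of "x / c"] by simp
  show "(2 - 2 * cos (x / c)) * c^2 \<le> 4 * c^2"
    by (rule mult_right_mono) (use cos_ge_minus_one[of "x / c"] in linarith, simp)
  have "2 - 2 * cos (x / c) = 4 * sin (x / (2 * c))^2"
    using cos_double_sin[of "x / (2 * c)"] by (simp add: field_simps)
  also have "\<dots> \<le> 4 * (x / (2 * c))^2"
    using abs_sin_x_le_abs_x[of "x / (2 * c)"] by (metis abs_ge_zero power2_abs power_mono mult_left_mono zero_le_numeral)
  finally show "(2 - 2 * cos (x / c)) * c^2 \<le> x^2"
    by (cases "c = 0") (auto simp: power_divide field_simps dest: mult_right_mono[of _ _ "c^2"])
qed

lemma tendsto_two_minus_two_cos_scaled:
  "(\<lambda>N. (2 - 2 * cos (x / real (Suc N))) * real (Suc N)^2) \<longlonglongrightarrow> x^2"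
proof -
  have "((\<lambda>N. (2 - 2 * cos (x / N)) * N^2) \<longlongrightarrow> x*x) at_top"
    by real_asymp
  then show ?thesis
    unfolding power2_eq_square[of x]
    by (rule filterlim_compose) (rule filterlim_compose[OF filterlim_real_sequentially filterlim_Suc])
qed

lemma entire_taylor_sums:
  assumes "F holomorphic_on UNIV"
  shows "(\<lambda>m. (deriv ^^ m) F 0 / fact m * z^m) sums F z"
proof -
  have "F holomorphic_on ball 0 (norm z + 1)"
    using assms holomorphic_on_subset by blast
  from holomorphic_power_series[OF this, of z] show ?thesis
    by simp
qed

lemma entire_even_taylor_sums_Re:
  assumes holo: "F holomorphic_on UNIV" and even_F: "\<And>z. F (-z) = F z"
  shows "(\<lambda>m. if even m then Re ((deriv ^^ m) F 0) / fact m * t^m else 0) sums Re (F (of_real t))"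
proof -
  have "(\<lambda>m. ((deriv ^^ m) F 0 / fact m * of_real t^m + (deriv ^^ m) F 0 / fact m * (- of_real t)^m) / 2)
      sums ((F (of_real t) + F (- of_real t)) / 2)"
    by (intro sums_divide sums_add entire_taylor_sums[OF holo])
  also have "(\<lambda>m. ((deriv ^^ m) F 0 / fact m * of_real t^m + (deriv ^^ m) F 0 / fact m * (- of_real t)^m) / 2)
      = (\<lambda>m. if even m then (deriv ^^ m) F 0 / fact m * of_real t^m else 0)"
    by auto
  finally have "(\<lambda>m. Re (if even m then (deriv ^^ m) F 0 / fact m * of_real t^m else 0)) sums Re (F (of_real t))"
    using even_F by (simp add: sums_Re)
  also have "(\<lambda>m. Re (if even m then (deriv ^^ m) F 0 / fact m * of_real t^m else 0))
      = (\<lambda>m. if even m then Re ((deriv ^^ m) F 0) / fact m * t^m else 0)"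
  proof
    fix m
    have "(fact m :: complex) = of_real (fact m)"
      by simp
    then show "Re (if even m then (deriv ^^ m) F 0 / fact m * of_real t^m else 0)
        = (if even m then Re ((deriv ^^ m) F 0) / fact m * t^m else 0)"
      by (simp del: of_real_fact flip: of_real_power)
  qed
  finally show ?thesis .
qed

context real_distribution
begin

lemma integral_two_minus_two_cos_power:
  "complex_of_real (\<integral>x. (2 - 2 * cos (h * x))^n \<partial>M) =
     (\<Sum>k\<le>n. \<Sum>l\<le>n. of_real (cos_power_weight n k l) * char M ((real k - real l) * h))"
proof -
  have integrable: "integrable M (\<lambda>x. c * iexp (a * x))" for c a
    by (intro integrable_mult_right integrable_iexp) auto
  have "complex_of_real (\<integral>x. (2 - 2 * cos (h * x))^n \<partial>M) = (CLINT x|M. complex_of_real ((2 - 2 * cos (h * x))^n))"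
    by (rule integral_complex_of_real[symmetric])
  also have "\<dots> = (CLINT x|M. \<Sum>k\<le>n. \<Sum>l\<le>n. of_real (cos_power_weight n k l) * iexp (((real k - real l) * h) * x))"
    by (simp only: of_real_two_minus_two_cos_power mult.assoc)
  also have "\<dots> = (\<Sum>k\<le>n. CLINT x|M. \<Sum>l\<le>n. of_real (cos_power_weight n k l) * iexp (((real k - real l) * h) * x))"
    by (rule Bochner_Integration.integral_sum, rule Bochner_Integration.integrable_sum, rule integrable)
  also have "\<dots> = (\<Sum>k\<le>n. \<Sum>l\<le>n. CLINT x|M. of_real (cos_power_weight n k l) * iexp (((real k - real l) * h) * x))"
    by (intro sum.cong refl Bochner_Integration.integral_sum integrable)
  also have "\<dots> = (\<Sum>k\<le>n. \<Sum>l\<le>n. of_real (cos_power_weight n k l) * char M ((real k - real l) * h))"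
    unfolding char_def by simp
  finally show ?thesis .
qed

lemma integrable_two_minus_two_cos_scaled_power:
  "integrable M (\<lambda>x. ((2 - 2 * cos (x / c)) * c^2)^n)"
proof (rule integrable_const_bound[where B="(4 * c^2)^n"])
  show "AE x in M. norm (((2 - 2 * cos (x / c)) * c^2)^n) \<le> (4 * c^2)^n"
    unfolding real_norm_def power_abs abs_of_nonneg[OF two_minus_two_cos_scaled_bounds(1)]
    by (intro AE_I2 power_mono two_minus_two_cos_scaled_bounds(1,3))
qed simp

lemma nn_integral_even_power_eq_lim:
  assumes lim: "(\<lambda>N. \<integral>x. ((2 - 2 * cos (x / real (Suc N))) * real (Suc N)^2)^n \<partial>M) \<longlonglongrightarrow> r"
  shows "(\<integral>\<^sup>+x. ennreal (x^(2*n)) \<partial>M) = ennreal r" and "0 \<le> r"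
proof -
  define D where "D N x = ((2 - 2 * cos (x / real (Suc N))) * real (Suc N)^2)^n" for N x
  have D_measurable[measurable]: "D N \<in> borel_measurable M" for N
    unfolding D_def by measurable
  have D_nonneg: "0 \<le> D N x" for N x
    unfolding D_def using two_minus_two_cos_scaled_bounds(1) by simp
  have D_le: "D N x \<le> x^(2*n)" for N x
    unfolding D_def power_mult
    by (intro power_mono two_minus_two_cos_scaled_bounds(1,2))
  have integrable_D: "integrable M (D N)" for N
    unfolding D_def by (rule integrable_two_minus_two_cos_scaled_power)
  have nn_integral_D: "(\<integral>\<^sup>+x. ennreal (D N x) \<partial>M) = ennreal (\<integral>x. D N x \<partial>M)" for N
    by (rule nn_integral_eq_integral[OF integrable_D]) (simp add: D_nonneg)
  have lim_D: "(\<lambda>N. \<integral>x. D N x \<partial>M) \<longlonglongrightarrow> r"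
    using lim unfolding D_def .
  then show "0 \<le> r"
    by (rule LIMSEQ_le_const) (use D_nonneg in \<open>auto intro: integral_nonneg_AE\<close>)
  have "(\<integral>\<^sup>+x. ennreal (x^(2*n)) \<partial>M) = (\<integral>\<^sup>+x. liminf (\<lambda>N. ennreal (D N x)) \<partial>M)"
  proof (rule nn_integral_cong)
    fix x
    have "(\<lambda>N. D N x) \<longlonglongrightarrow> x^(2*n)"
      unfolding D_def power_mult by (intro tendsto_intros tendsto_two_minus_two_cos_scaled)
    then have "(\<lambda>N. ennreal (D N x)) \<longlonglongrightarrow> ennreal (x^(2*n))"
      by (rule tendsto_ennrealI)
    then show "ennreal (x^(2*n)) = liminf (\<lambda>N. ennreal (D N x))"
      by (simp add: lim_imp_Liminf)
  qed
  also have "\<dots> \<le> liminf (\<lambda>N. \<integral>\<^sup>+x. ennreal (D N x) \<partial>M)"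
    by (rule nn_integral_liminf) simp
  also have "\<dots> = ennreal r"
    using tendsto_ennrealI[OF lim_D] unfolding nn_integral_D[symmetric] by (simp add: lim_imp_Liminf)
  finally have "(\<integral>\<^sup>+x. ennreal (x^(2*n)) \<partial>M) \<le> ennreal r" .
  moreover have "ennreal r \<le> (\<integral>\<^sup>+x. ennreal (x^(2*n)) \<partial>M)"
  proof (rule LIMSEQ_le_const2[OF tendsto_ennrealI[OF lim_D]], intro exI allI impI)
    fix N
    have "ennreal (\<integral>x. D N x \<partial>M) = (\<integral>\<^sup>+x. ennreal (D N x) \<partial>M)"
      by (simp add: nn_integral_D)
    also have "\<dots> \<le> (\<integral>\<^sup>+x. ennreal (x^(2*n)) \<partial>M)"
      by (rule nn_integral_mono) (simp add: D_le)
    finally show "ennreal (\<integral>x. D N x \<partial>M) \<le> (\<integral>\<^sup>+x. ennreal (x^(2*n)) \<partial>M)" .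
  qed
  ultimately show "(\<integral>\<^sup>+x. ennreal (x^(2*n)) \<partial>M) = ennreal r"
    by (rule antisym)
qed

lemma tendsto_integral_two_minus_two_cos_power_entire_char:
  assumes holo: "F holomorphic_on UNIV" and char_F: "\<And>s. char M s = F (\<i> * of_real s)"
  shows "((\<lambda>h. (\<integral>x. (2 - 2 * cos (h * x))^n \<partial>M) / h^(2*n)) \<longlongrightarrow> Re ((deriv ^^ (2*n)) F 0)) (at 0)"
proof -
  define d where "d m = (deriv ^^ m) F 0 / fact m" for m
  define a where "a m = d m * \<i>^m * of_real (alt_difference_sum n m)" for m
  define g where "g z = (\<Sum>k\<le>n. \<Sum>l\<le>n. of_real (cos_power_weight n k l) * F (\<i> * (of_real (real k - real l) * z)))" for z
  have "(\<lambda>m. a m * z^m) sums g z" for z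
  proof -
    have "(\<lambda>m. \<Sum>k\<le>n. \<Sum>l\<le>n. of_real (cos_power_weight n k l) * (d m * (\<i> * (of_real (real k - real l) * z))^m))
        sums g z"
      unfolding g_def d_def by (intro sums_sum sums_mult entire_taylor_sums[OF holo])
    moreover have "(\<Sum>k\<le>n. \<Sum>l\<le>n. of_real (cos_power_weight n k l) * (d m * (\<i> * (of_real (real k - real l) * z))^m))
        = a m * z^m" for m
      unfolding a_def alt_difference_sum_def of_real_sum sum_distrib_left sum_distrib_right
      by (intro sum.cong refl) (simp add: power_mult_distrib mult_ac)
    ultimately show ?thesis by simp
  qed
  moreover have "a m = 0" if "m < 2*n" for m
    using that by (simp add: a_def alt_difference_sum_eq_0)
  ultimately have "((\<lambda>z. g z / z^(2*n)) \<longlongrightarrow> a (2*n)) (at 0)"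
    by (rule powser_div_power_tendsto)
  moreover have "a (2*n) = (deriv ^^ (2*n)) F 0"
    by (simp add: a_def d_def alt_difference_sum_double power_mult)
  moreover have "filterlim (\<lambda>h. complex_of_real h) (at 0) (at 0)"
    by (intro filterlim_atI tendsto_of_real[OF tendsto_ident_at, THEN tendsto_eq_rhs]) (auto simp: eventually_at_filter)
  ultimately have "((\<lambda>h. g (of_real h) / of_real h^(2*n)) \<longlongrightarrow> (deriv ^^ (2*n)) F 0) (at 0)"
    using filterlim_compose by fastforce
  moreover have "g (of_real h) = of_real (\<integral>x. (2 - 2 * cos (h * x))^n \<partial>M)" for h
    unfolding g_def integral_two_minus_two_cos_power char_F by simp
  ultimately show ?thesis
    using tendsto_Re by fastforce
qed

lemma nn_integral_even_power_entire_char: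
  assumes holo: "F holomorphic_on UNIV" and char_F: "\<And>s. char M s = F (\<i> * of_real s)"
  shows "(\<integral>\<^sup>+x. ennreal (x^(2*n)) \<partial>M) = ennreal (Re ((deriv ^^ (2*n)) F 0))"
    and "0 \<le> Re ((deriv ^^ (2*n)) F 0)"
proof -
  have "filterlim (\<lambda>N. inverse (real (Suc N))) (at 0) sequentially"
    using LIMSEQ_inverse_real_of_nat by (intro filterlim_atI) simp_all
  from filterlim_compose[OF tendsto_integral_two_minus_two_cos_power_entire_char[OF holo char_F] this]
  have "(\<lambda>N. (\<integral>x. (2 - 2 * cos (inverse (real (Suc N)) * x))^n \<partial>M) / inverse (real (Suc N))^(2*n))
      \<longlonglongrightarrow> Re ((deriv ^^ (2*n)) F 0)" .
  moreover have "(\<integral>x. (2 - 2 * cos (inverse (real (Suc N)) * x))^n \<partial>M) / inverse (real (Suc N))^(2*n)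
      = (\<integral>x. ((2 - 2 * cos (x / real (Suc N))) * real (Suc N)^2)^n \<partial>M)" for N
    unfolding integral_divide_zero[symmetric] power_mult
    by (intro Bochner_Integration.integral_cong refl) (simp add: power_mult_distrib divide_inverse mult.commute power_inverse)
  ultimately show "(\<integral>\<^sup>+x. ennreal (x^(2*n)) \<partial>M) = ennreal (Re ((deriv ^^ (2*n)) F 0))"
    and "0 \<le> Re ((deriv ^^ (2*n)) F 0)"
    by (simp_all add: nn_integral_even_power_eq_lim)
qed

lemma nn_integral_cosh_entire_char:
  assumes holo: "F holomorphic_on UNIV" and char_F: "\<And>s. char M s = F (\<i> * of_real s)"
    and even_F: "\<And>z. F (-z) = F z"
  shows "(\<integral>\<^sup>+x. ennreal (cosh (t * x)) \<partial>M) = ennreal (Re (F (of_real t)))"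
proof -
  define c where "c m = (if even m then Re ((deriv ^^ m) F 0) / fact m * t^m else 0)" for m
  have c_nonneg: "0 \<le> c m" for m
    using nn_integral_even_power_entire_char(2)[OF holo char_F]
    by (auto simp: c_def zero_le_even_power elim!: evenE)
  have "c sums Re (F (of_real t))"
    unfolding c_def by (rule entire_even_taylor_sums_Re[OF holo even_F])
  have moment: "(\<integral>\<^sup>+x. ennreal (if even m then (t*x)^m / fact m else 0) \<partial>M) = ennreal (c m)" for m
  proof (cases "even m")
    case True
    then obtain n where m: "m = 2*n" by (auto elim!: evenE)
    have "(\<integral>\<^sup>+x. ennreal ((t*x)^m / fact m) \<partial>M) = (\<integral>\<^sup>+x. ennreal (t^m / fact m) * ennreal (x^m) \<partial>M)"
      using True by (intro nn_integral_cong) (simp add: ennreal_mult[symmetric] zero_le_even_power power_mult_distrib)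
    also have "\<dots> = ennreal (t^m / fact m) * ennreal (Re ((deriv ^^ m) F 0))"
      unfolding m by (simp add: nn_integral_cmult nn_integral_even_power_entire_char(1)[OF holo char_F])
    also have "\<dots> = ennreal (c m)"
      using True nn_integral_even_power_entire_char(2)[OF holo char_F, of n]
      by (simp add: c_def m ennreal_mult[symmetric] zero_le_even_power mult_ac)
    finally show ?thesis
      using True by simp
  qed (simp add: c_def)
  have "(\<integral>\<^sup>+x. ennreal (cosh (t * x)) \<partial>M) = (\<integral>\<^sup>+x. (\<Sum>m. ennreal (if even m then (t*x)^m / fact m else 0)) \<partial>M)"
  proof (rule nn_integral_cong)
    fix x
    have "(\<lambda>m. if even m then (t*x)^m /\<^sub>R fact m else 0) = (\<lambda>m. if even m then (t*x)^m / fact m else 0)"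
      by (rule ext) (simp add: divide_inverse mult.commute)
    then have "(\<lambda>m. if even m then (t*x)^m / fact m else 0) sums cosh (t*x)"
      using cosh_converges[of "t*x"] by simp
    then show "ennreal (cosh (t * x)) = (\<Sum>m. ennreal (if even m then (t*x)^m / fact m else 0))"
      by (subst suminf_ennreal2) (auto simp: sums_iff zero_le_even_power)
  qed
  also have "\<dots> = (\<Sum>m. \<integral>\<^sup>+x. ennreal (if even m then (t*x)^m / fact m else 0) \<partial>M)"
    by (rule nn_integral_suminf) simp
  also have "\<dots> = ennreal (Re (F (of_real t)))"
    unfolding moment using \<open>c sums _\<close> c_nonneg
    by (subst suminf_ennreal2) (auto simp: sums_iff)
  finally show ?thesis .
qed

lemma nn_integral_exp_eq_cosh_if_symmetric:
  assumes symmetric: "\<And>s. char M (-s) = char M s"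
  shows "(\<integral>\<^sup>+x. ennreal (exp (t * x)) \<partial>M) = (\<integral>\<^sup>+x. ennreal (cosh (t * x)) \<partial>M)"
proof -
  have "distr M borel uminus = M"
  proof (rule Levy_uniqueness)
    show "real_distribution (distr M borel uminus)"
      by (rule real_distribution_distr) simp
    show "char (distr M borel uminus) = char M"
    proof
      fix s
      have "char (distr M borel uminus) s = char M (-s)"
        unfolding char_def by (simp add: integral_distr)
      then show "char (distr M borel uminus) s = char M s"
        by (simp add: symmetric)
    qed
  qed (rule real_distribution_axioms)
  then have "(\<integral>\<^sup>+x. ennreal (exp (t * x)) \<partial>M) = (\<integral>\<^sup>+x. ennreal (exp (t * x)) \<partial>distr M borel uminus)"
    by simp
  also have "\<dots> = (\<integral>\<^sup>+x. ennreal (exp (- t * x)) \<partial>M)"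
    by (subst nn_integral_distr) simp_all
  finally have reflect: "(\<integral>\<^sup>+x. ennreal (exp (- t * x)) \<partial>M) = (\<integral>\<^sup>+x. ennreal (exp (t * x)) \<partial>M)" ..
  have "2 * (\<integral>\<^sup>+x. ennreal (cosh (t * x)) \<partial>M) = (\<integral>\<^sup>+x. 2 * ennreal (cosh (t * x)) \<partial>M)"
    by (rule nn_integral_cmult[symmetric]) (simp add: cosh_def)
  also have "\<dots> = (\<integral>\<^sup>+x. ennreal (exp (t * x)) + ennreal (exp (- t * x)) \<partial>M)"
  proof (rule nn_integral_cong)
    fix x
    have "ennreal (exp (t * x)) + ennreal (exp (- t * x)) = ennreal (2 * cosh (t * x))"
      by (simp add: cosh_def flip: ennreal_plus)
    then show "2 * ennreal (cosh (t * x)) = ennreal (exp (t * x)) + ennreal (exp (- t * x))"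
      by (simp add: ennreal_mult)
  qed
  also have "\<dots> = (\<integral>\<^sup>+x. ennreal (exp (t * x)) \<partial>M) + (\<integral>\<^sup>+x. ennreal (exp (- t * x)) \<partial>M)"
    by (rule nn_integral_add) simp_all
  also have "\<dots> = 2 * (\<integral>\<^sup>+x. ennreal (exp (t * x)) \<partial>M)"
    unfolding reflect by (simp add: mult_2)
  finally show ?thesis
    by (simp add: ennreal_mult_cancel_left)
qed

end

lemma has_bochner_integral_powr_0_1:
  fixes a :: real
  assumes "a > -1"
  shows "has_bochner_integral lborel (\<lambda>x. indicator {0<..1} x * x powr a) (1 / (a + 1))"
proof -
  have on_closed: "((\<lambda>x. x powr a) has_integral (1 / (a + 1))) {0..1}"
    using has_integral_powr_from_0[of a 1] assms by simp
  have has_integral: "((\<lambda>x. x powr a) has_integral (1 / (a + 1))) {0<..1}"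
    by (rule has_integral_spike_set_eq[THEN iffD1, OF _ _ on_closed]; rule negligible_subset[of "{0}"]; auto)
  then have "(\<lambda>x. x powr a) absolutely_integrable_on {0<..1}"
    by (intro nonnegative_absolutely_integrable_1) (auto simp: has_integral_integrable)
  moreover have "(\<lambda>x. indicator {0<..1::real} x *\<^sub>R x powr a) \<in> borel_measurable lborel"
    by measurable
  ultimately have integrable: "set_integrable lborel {0<..1} (\<lambda>x. x powr a)"
    unfolding set_integrable_def absolutely_integrable_on_def using integrable_completion by blast
  moreover have "(LBINT x:{0<..1}. x powr a) = 1 / (a + 1)"
    using set_borel_integral_eq_integral(2)[OF integrable] has_integral integral_unique by metis
  ultimately show ?thesis
    by (simp add: has_bochner_integral_iff set_integrable_def set_lebesgue_integral_def)
qed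

text \<open>\<open>levy_series \<alpha> t = \<integral>\<^sub>0\<^sup>1 (cosh (t x) - 1) x\<^sup>-\<^sup>\<alpha>\<^sup>-\<^sup>1 dx\<close>, expanded termwise.\<close>

definition levy_coeff :: "real \<Rightarrow> nat \<Rightarrow> real" where
  "levy_coeff \<alpha> m = (if even m \<and> m \<noteq> 0 then 1 / (fact m * (real m - \<alpha>)) else 0)"

definition levy_series :: "real \<Rightarrow> 'a::{real_normed_field,banach} \<Rightarrow> 'a" where
  "levy_series \<alpha> z = (\<Sum>m. of_real (levy_coeff \<alpha> m) * z^m)"

lemma even_nonzero_ge_2: "even m \<Longrightarrow> m \<noteq> 0 \<Longrightarrow> 2 \<le> (m::nat)"
  by presburger

lemma levy_coeff_nonneg: "\<alpha> < 2 \<Longrightarrow> 0 \<le> levy_coeff \<alpha> m"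
  using even_nonzero_ge_2[of m] by (auto simp: levy_coeff_def)

lemma abs_levy_coeff_le:
  assumes "\<alpha> < 2"
  shows "\<bar>levy_coeff \<alpha> m\<bar> \<le> inverse (fact m) / (2 - \<alpha>)"
proof (cases "even m \<and> m \<noteq> 0")
  case True
  then have "2 - \<alpha> \<le> real m - \<alpha>"
    using even_nonzero_ge_2[of m] by simp
  with assms True show ?thesis
    by (simp add: levy_coeff_def divide_simps)
qed (use assms in \<open>auto simp: levy_coeff_def\<close>)

lemma summable_levy_series:
  fixes z :: "'a::{real_normed_field,banach}"
  assumes "\<alpha> < 2"
  shows "summable (\<lambda>m. of_real (levy_coeff \<alpha> m) * z^m)"
proof (rule summable_comparison_test[OF _ summable_mult2[OF summable_exp[of "norm z"]]])
  show "\<exists>N. \<forall>m\<ge>N. norm (of_real (levy_coeff \<alpha> m) * z^m) \<le> inverse (fact m) * norm z ^ m * (1 / (2 - \<alpha>))"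
  proof (intro exI allI impI)
    fix m
    have "norm (of_real (levy_coeff \<alpha> m) * z^m) = \<bar>levy_coeff \<alpha> m\<bar> * norm z ^ m"
      by (simp add: norm_mult norm_power)
    also have "\<dots> \<le> inverse (fact m) / (2 - \<alpha>) * norm z ^ m"
      by (rule mult_right_mono[OF abs_levy_coeff_le[OF assms]]) simp
    finally show "norm (of_real (levy_coeff \<alpha> m) * z^m) \<le> inverse (fact m) * norm z ^ m * (1 / (2 - \<alpha>))"
      by simp
  qed
qed

lemma levy_series_of_real:
  assumes "\<alpha> < 2"
  shows "levy_series \<alpha> (of_real r :: 'a::{real_normed_field,banach}) = of_real (levy_series \<alpha> r)"
proof -
  have "(\<lambda>m. of_real (levy_coeff \<alpha> m * r^m) :: 'a) sums of_real (\<Sum>m. levy_coeff \<alpha> m * r^m)"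
    by (intro sums_of_real summable_sums) (use summable_levy_series[OF assms, of r] in simp)
  then show ?thesis
    unfolding levy_series_def by (simp add: sums_unique[symmetric])
qed

lemma levy_series_minus: "levy_series \<alpha> (-z) = levy_series \<alpha> z"
proof -
  have term_eq: "of_real (levy_coeff \<alpha> m) * (-z)^m = of_real (levy_coeff \<alpha> m) * z^m" for m
  proof (cases "even m")
    case False
    then have "levy_coeff \<alpha> m = 0"
      by (simp add: levy_coeff_def)
    then show ?thesis
      by simp
  qed simp
  show ?thesis
    unfolding levy_series_def term_eq ..
qed

lemma holomorphic_levy_series:
  assumes "\<alpha> < 2"
  shows "(levy_series \<alpha> :: complex \<Rightarrow> complex) holomorphic_on UNIV"
proof -
  have "(levy_series \<alpha> has_field_derivative (\<Sum>m. diffs (\<lambda>m. complex_of_real (levy_coeff \<alpha> m)) m * z^m)) (at z)" for z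
    unfolding levy_series_def fun_eq_iff
    by (rule termdiffs_strong_converges_everywhere[OF summable_levy_series[OF assms]])
  then show ?thesis
    unfolding holomorphic_on_def field_differentiable_def
    by (auto intro: has_field_derivative_at_within)
qed

definition levy_integrand_term :: "real \<Rightarrow> real \<Rightarrow> nat \<Rightarrow> real \<Rightarrow> real" where
  "levy_integrand_term \<alpha> s m x =
     indicator {0<..1} x * (if m = 0 then 0 else cos_coeff m * s^m * x powr (real m - \<alpha> - 1))"

lemma levy_integrand_term_sums:
  "(\<lambda>m. levy_integrand_term \<alpha> s m x) sums (indicator {0<..1} x * ((cos (s*x) - 1) / x powr (\<alpha> + 1)))"
proof (cases "x \<in> {0<..1}")
  case True
  have "(\<lambda>m. cos_coeff m * (s*x)^m - (if m = 0 then 1 else 0)) sums (cos (s*x) - 1)"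
    using cos_converges[of "s*x"] sums_single[of 0 "\<lambda>_. 1::real"] by (intro sums_diff) simp_all
  then have "(\<lambda>m. (cos_coeff m * (s*x)^m - (if m = 0 then 1 else 0)) / x powr (\<alpha> + 1))
      sums ((cos (s*x) - 1) / x powr (\<alpha> + 1))"
    by (rule sums_divide)
  moreover have "(cos_coeff m * (s*x)^m - (if m = 0 then 1 else 0)) / x powr (\<alpha> + 1) = levy_integrand_term \<alpha> s m x" for m
  proof (cases "m = 0")
    case False
    have "x powr (real m - \<alpha> - 1) = x^m / x powr (\<alpha> + 1)"
      using True by (simp add: powr_diff[symmetric] powr_realpow[symmetric] algebra_simps)
    then show ?thesis
      using False True by (simp add: levy_integrand_term_def power_mult_distrib)
  qed (simp add: levy_integrand_term_def cos_coeff_def)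
  ultimately show ?thesis
    using True by simp
qed (simp add: levy_integrand_term_def)

lemma has_bochner_integral_levy_integrand_term:
  assumes "\<alpha> < 2"
  shows "has_bochner_integral lborel (levy_integrand_term \<alpha> s m) (levy_coeff \<alpha> m * (-1)^(m div 2) * s^m)"
    and "has_bochner_integral lborel (\<lambda>x. norm (levy_integrand_term \<alpha> s m x)) (levy_coeff \<alpha> m * \<bar>s\<bar>^m)"
proof -
  consider "even m" "m \<noteq> 0" | "odd m \<or> m = 0"
    by blast
  then have "has_bochner_integral lborel (levy_integrand_term \<alpha> s m) (levy_coeff \<alpha> m * (-1)^(m div 2) * s^m)
      \<and> has_bochner_integral lborel (\<lambda>x. norm (levy_integrand_term \<alpha> s m x)) (levy_coeff \<alpha> m * \<bar>s\<bar>^m)"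
  proof cases
    case 1
    with assms have "real m - \<alpha> - 1 > -1"
      using even_nonzero_ge_2[of m] by simp
    from has_bochner_integral_powr_0_1[OF this]
    have "has_bochner_integral lborel (\<lambda>x. c * (indicator {0<..1} x * x powr (real m - \<alpha> - 1))) (c / (real m - \<alpha>))" for c
      using has_bochner_integral_mult_right by fastforce
    moreover have "levy_integrand_term \<alpha> s m = (\<lambda>x. (cos_coeff m * s^m) * (indicator {0<..1} x * x powr (real m - \<alpha> - 1)))"
      and "(\<lambda>x. norm (levy_integrand_term \<alpha> s m x)) = (\<lambda>x. \<bar>cos_coeff m * s^m\<bar> * (indicator {0<..1} x * x powr (real m - \<alpha> - 1)))"
      using 1 by (auto simp: levy_integrand_term_def abs_mult indicator_def fun_eq_iff)
    moreover have "cos_coeff m * s^m / (real m - \<alpha>) = levy_coeff \<alpha> m * (-1)^(m div 2) * s^m"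
      and "\<bar>cos_coeff m * s^m\<bar> / (real m - \<alpha>) = levy_coeff \<alpha> m * \<bar>s\<bar>^m"
      using 1 \<open>real m - \<alpha> - 1 > -1\<close> by (simp_all add: cos_coeff_def levy_coeff_def abs_mult power_abs)
    ultimately show ?thesis
      by metis
  next
    case 2
    then have "levy_integrand_term \<alpha> s m = (\<lambda>x. 0)" "levy_coeff \<alpha> m = 0"
      by (auto simp: levy_integrand_term_def levy_coeff_def cos_coeff_def fun_eq_iff)
    then show ?thesis
      by (simp add: has_bochner_integral_zero)
  qed
  then show "has_bochner_integral lborel (levy_integrand_term \<alpha> s m) (levy_coeff \<alpha> m * (-1)^(m div 2) * s^m)"
    and "has_bochner_integral lborel (\<lambda>x. norm (levy_integrand_term \<alpha> s m x)) (levy_coeff \<alpha> m * \<bar>s\<bar>^m)"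
    by blast+
qed

lemma summable_norm_levy_integrand_term:
  "summable (\<lambda>m. norm (levy_integrand_term \<alpha> s m x))"
proof (cases "x \<in> {0<..1}")
  case True
  then have x: "0 < x" "x \<le> 1"
    by auto
  have "norm (levy_integrand_term \<alpha> s m x) \<le> x powr (- \<alpha> - 1) * (inverse (fact m) * \<bar>s\<bar>^m)" for m
  proof -
    have "x powr (real m - \<alpha> - 1) = x^m * x powr (- \<alpha> - 1)"
      using x by (simp add: powr_add[symmetric] powr_realpow[symmetric] algebra_simps)
    also have "\<dots> \<le> x powr (- \<alpha> - 1)"
      using x mult_right_mono[of "x^m" 1 "x powr (- \<alpha> - 1)"] by (simp add: power_le_one)
    finally have "x powr (real m - \<alpha> - 1) \<le> x powr (- \<alpha> - 1)" .
    moreover have "\<bar>cos_coeff m\<bar> \<le> inverse (fact m)"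
      by (simp add: cos_coeff_def divide_inverse abs_mult)
    ultimately have "\<bar>cos_coeff m\<bar> * \<bar>s\<bar>^m * x powr (real m - \<alpha> - 1) \<le> inverse (fact m) * \<bar>s\<bar>^m * x powr (- \<alpha> - 1)"
      by (intro mult_mono) auto
    then show ?thesis
      using True by (simp add: levy_integrand_term_def abs_mult power_abs mult_ac)
  qed
  then show ?thesis
    by (intro summable_comparison_test[OF _ summable_mult[OF summable_exp[of "\<bar>s\<bar>"]]]) auto
qed (simp add: levy_integrand_term_def)

lemma set_integral_cos_minus_one_div_powr:
  assumes "\<alpha> < 2"
  shows "(LBINT x:{0<..1}. (cos (s*x) - 1) / x powr (\<alpha> + 1)) = (\<Sum>m. levy_coeff \<alpha> m * (-1)^(m div 2) * s^m)"
proof -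
  note integral = has_bochner_integral_levy_integrand_term[OF assms]
  have "(LBINT x:{0<..1}. (cos (s*x) - 1) / x powr (\<alpha> + 1)) = (\<integral>x. (\<Sum>m. levy_integrand_term \<alpha> s m x) \<partial>lborel)"
    unfolding set_lebesgue_integral_def using levy_integrand_term_sums by (simp add: sums_iff)
  also have "\<dots> = (\<Sum>m. \<integral>x. levy_integrand_term \<alpha> s m x \<partial>lborel)"
  proof (rule integral_suminf)
    show "integrable lborel (levy_integrand_term \<alpha> s m)" for m
      using integral(1) by (simp add: has_bochner_integral_iff)
    show "AE x in lborel. summable (\<lambda>m. norm (levy_integrand_term \<alpha> s m x))"
      by (rule AE_I2, rule summable_norm_levy_integrand_term)
    have "(\<integral>x. norm (levy_integrand_term \<alpha> s m x) \<partial>lborel) = levy_coeff \<alpha> m * \<bar>s\<bar>^m" for m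
      using integral(2) by (rule has_bochner_integral_integral_eq)
    then show "summable (\<lambda>m. \<integral>x. norm (levy_integrand_term \<alpha> s m x) \<partial>lborel)"
      using summable_levy_series[OF assms, of "\<bar>s\<bar>"] by simp
  qed
  also have "\<dots> = (\<Sum>m. levy_coeff \<alpha> m * (-1)^(m div 2) * s^m)"
    using has_bochner_integral_integral_eq[OF integral(1)] by simp
  finally show ?thesis .
qed

lemma levy_series_imaginary:
  assumes "\<alpha> < 2"
  shows "levy_series \<alpha> (\<i> * of_real s) = of_real (LBINT x:{0<..1}. (cos (s*x) - 1) / x powr (\<alpha> + 1))"
proof -
  have term_eq: "of_real (levy_coeff \<alpha> m) * (\<i> * of_real s)^m = of_real (levy_coeff \<alpha> m * (-1)^(m div 2) * s^m)" for m
  proof (cases "even m")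
    case True
    then show ?thesis
      by (auto simp: power_mult_distrib power_mult elim!: evenE)
  qed (simp add: levy_coeff_def)
  have "summable (\<lambda>m. levy_coeff \<alpha> m * (-1)^(m div 2) * s^m)"
    using summable_levy_series[OF assms, of "\<i> * of_real s"]
    unfolding term_eq summable_of_real_iff .
  then show ?thesis
    unfolding levy_series_def term_eq set_integral_cos_minus_one_div_powr[OF assms]
    by (simp add: suminf_of_real)
qed

lemma levy_series_lower_bound:
  assumes "\<alpha> < 2"
  shows "t\<^sup>2 / (2 - \<alpha>) \<le> 2 * levy_series \<alpha> t"
proof -
  have "0 \<le> levy_coeff \<alpha> m * t^m" for m
  proof (cases "even m")
    case True
    then show ?thesis
      using levy_coeff_nonneg[OF assms, of m] by (simp add: zero_le_even_power)
  qed (simp add: levy_coeff_def)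
  then have "levy_coeff \<alpha> 2 * t^2 \<le> levy_series \<alpha> t"
    using sum_le_suminf[OF summable_levy_series[OF assms, of t], of "{2}"] by (simp add: levy_series_def)
  with assms show ?thesis
    by (simp add: levy_coeff_def field_simps)
qed

lemma levy_term_le_cosh_term:
  assumes "\<alpha> < 2" and "2 \<le> m"
  shows "2 * (levy_coeff \<alpha> (m + 4) * t^(m + 4)) \<le> t^4 / 360 * (if even m then t^m / fact m else 0)"
proof (cases "even m")
  case True
  define P where "P = real ((m + 1) * (m + 2) * (m + 3) * (m + 4))"
  have "fact (m + 4) = P * fact m"
    by (simp add: P_def fact_Suc algebra_simps eval_nat_numeral)
  have "360 \<le> P"
  proof -
    have "3 * 4 * 5 * 6 \<le> (m + 1) * (m + 2) * (m + 3) * (m + 4)"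
      using assms(2) by (intro mult_mono) auto
    then show ?thesis
      unfolding P_def by linarith
  qed
  have "4 \<le> real (m + 4) - \<alpha>"
    using assms by simp
  have "0 \<le> t^4 * t^m"
    using True by (simp add: zero_le_even_power)
  moreover have "2 / (P * fact m * (real (m + 4) - \<alpha>)) \<le> 1 / (360 * fact m)"
  proof -
    have "360 * fact m * 4 \<le> P * fact m * (real (m + 4) - \<alpha>)"
      using \<open>360 \<le> P\<close> \<open>4 \<le> real (m + 4) - \<alpha>\<close> by (intro mult_mono) auto
    then have "2 / (P * fact m * (real (m + 4) - \<alpha>)) \<le> 2 / (720 * fact m)"
      by (intro frac_le) auto
    then show ?thesis
      by simp
  qed
  ultimately have "t^4 * t^m * (2 / (P * fact m * (real (m + 4) - \<alpha>))) \<le> t^4 * t^m * (1 / (360 * fact m))"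
    by (rule mult_left_mono[rotated])
  then show ?thesis
    using True \<open>fact (m + 4) = P * fact m\<close>
    by (simp add: levy_coeff_def power_add mult_ac)
qed (simp add: levy_coeff_def)

lemma levy_series_upper_bound:
  assumes "\<alpha> < 2"
  shows "2 * levy_series \<alpha> t \<le> 1/24 * t^4 * (14/15 + 1/15 * cosh t) + t\<^sup>2 / (2 - \<alpha>)"
proof -
  have series: "(\<lambda>m. levy_coeff \<alpha> m * t^m) sums levy_series \<alpha> t"
    using summable_levy_series[OF assms, of t] by (simp add: levy_series_def summable_sums)
  have head: "(\<Sum>m<6. levy_coeff \<alpha> m * t^m) = t\<^sup>2 / (2 * (2 - \<alpha>)) + t^4 / (24 * (4 - \<alpha>))"
  proof -
    have "{..<6::nat} = {0, 1, 2, 3, 4, 5}"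
      by auto
    moreover have "fact 4 = (24::real)"
      by (simp add: fact_numeral)
    ultimately show ?thesis
      by (simp add: levy_coeff_def)
  qed
  have "(\<lambda>m. if even m then t^m /\<^sub>R fact m else 0) = (\<lambda>m. if even m then t^m / fact m else 0)"
    by (rule ext) (simp add: divide_inverse mult.commute)
  then have "(\<lambda>m. if even m then t^m / fact m else 0) sums cosh t"
    using cosh_converges[of t] by simp
  from sums_split_initial_segment[OF this, of 2]
  have cosh_tail: "(\<lambda>m. if even (m + 2) then t^(m + 2) / fact (m + 2) else 0) sums (cosh t - 1)"
    by (simp add: eval_nat_numeral)
  have "2 * (levy_series \<alpha> t - (\<Sum>m<6. levy_coeff \<alpha> m * t^m)) \<le> t^4 / 360 * (cosh t - 1)"
  proof (rule sums_le)
    show "(\<lambda>m. 2 * (levy_coeff \<alpha> (m + 6) * t^(m + 6))) sums (2 * (levy_series \<alpha> t - (\<Sum>m<6. levy_coeff \<alpha> m * t^m)))"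
      by (intro sums_mult sums_split_initial_segment series)
    show "(\<lambda>m. t^4 / 360 * (if even (m + 2) then t^(m + 2) / fact (m + 2) else 0)) sums (t^4 / 360 * (cosh t - 1))"
      by (intro sums_mult cosh_tail)
    show "2 * (levy_coeff \<alpha> (m + 6) * t^(m + 6)) \<le> t^4 / 360 * (if even (m + 2) then t^(m + 2) / fact (m + 2) else 0)" for m
      using levy_term_le_cosh_term[OF assms le_add2, of m t] by (simp only: add.assoc numeral_plus_numeral semiring_norm)
  qed
  moreover have "t^4 / (24 * (4 - \<alpha>)) \<le> t^4 / 48"
    using assms by (intro divide_left_mono) auto
  moreover have "2 * (t\<^sup>2 / (2 * (2 - \<alpha>))) = t\<^sup>2 / (2 - \<alpha>)"
    using assms by (simp add: field_simps)
  moreover have "1/24 * t^4 * (14/15 + 1/15 * cosh t) = t^4 / 48 + t^4 / 48 + t^4 / 360 * (cosh t - 1)"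
    by (simp add: field_simps)
  ultimately show ?thesis
    unfolding head by (smt (verit))
qed

lemma (in real_distribution) nn_integral_exp_levy_char:
  assumes "\<alpha> < 2"
    and char_M: "\<And>s. char M s = of_real (exp (2 * (LBINT x:{0<..1}. (cos (s * x) - 1) / x powr (\<alpha> + 1))))"
  shows "(\<integral>\<^sup>+x. ennreal (exp (t * x)) \<partial>M) = ennreal (exp (2 * levy_series \<alpha> t))"
proof -
  define F where "F z = exp (2 * levy_series \<alpha> z)" for z :: complex
  have holo: "F holomorphic_on UNIV"
    unfolding F_def by (intro holomorphic_intros holomorphic_levy_series assms(1))
  have char_F: "char M s = F (\<i> * of_real s)" for s
    unfolding char_M F_def levy_series_imaginary[OF assms(1)] by (simp flip: exp_of_real)
  have even_F: "F (-z) = F z" for z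
    by (simp add: F_def levy_series_minus)
  have "(\<integral>\<^sup>+x. ennreal (exp (t * x)) \<partial>M) = (\<integral>\<^sup>+x. ennreal (cosh (t * x)) \<partial>M)"
    by (rule nn_integral_exp_eq_cosh_if_symmetric) (simp add: char_F even_F[of "\<i> * of_real _", symmetric])
  also have "\<dots> = ennreal (Re (F (of_real t)))"
    by (rule nn_integral_cosh_entire_char[OF holo char_F even_F])
  also have "F (of_real t) = of_real (exp (2 * levy_series \<alpha> t))"
    unfolding F_def levy_series_of_real[OF assms(1)] using exp_of_real[of "2 * levy_series \<alpha> t"] by simp
  finally show ?thesis
    by simp
qed

theorem lemma17:
  fixes M :: "'a measure" and X :: "'a \<Rightarrow> real" and \<alpha> :: real
  assumes "prob_space M"
    and "X \<in> borel_measurable M"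
    and "1 < \<alpha>" and "\<alpha> < 2"
    and "\<And>s. char (distr M borel X) s =
           complex_of_real (exp (2 * (LBINT x:{0<..1}. (cos (s * x) - 1) / x powr (\<alpha> + 1))))"
  shows "ennreal (exp (t\<^sup>2 / (2 - \<alpha>))) \<le> (\<integral>\<^sup>+ \<omega>. ennreal (exp (t * X \<omega>)) \<partial>M)
    \<and> (\<integral>\<^sup>+ \<omega>. ennreal (exp (t * X \<omega>)) \<partial>M)
        \<le> ennreal (exp (1/24 * t^4 * (14/15 + 1/15 * cosh t)) * exp (t\<^sup>2 / (2 - \<alpha>)))"
proof -
  interpret prob_space M
    by (rule assms(1))
  interpret \<mu>: real_distribution "distr M borel X"
    using assms(2) by (rule real_distribution_distr)
  have "(\<integral>\<^sup>+\<omega>. ennreal (exp (t * X \<omega>)) \<partial>M) = (\<integral>\<^sup>+x. ennreal (exp (t * x)) \<partial>distr M borel X)"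
    using assms(2) by (simp add: nn_integral_distr)
  also have "\<dots> = ennreal (exp (2 * levy_series \<alpha> t))"
    by (rule \<mu>.nn_integral_exp_levy_char[OF assms(4,5)])
  finally show ?thesis
    using levy_series_lower_bound[OF assms(4), of t] levy_series_upper_bound[OF assms(4), of t]
    by (auto intro!: ennreal_leI simp flip: exp_add)
qed

end
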